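(* Let $\mathcal{M}=(E,\mathcal{C})$ be a loopless oriented matroid with $E=\{e_1,\dots,e_m\}$ ordered $e_1\prec\cdots\prec e_m$, and let $1\le k\le m$. The map $\psi_k:\mathscr{N}_{k-1}\to\mathscr{N}_k$ is surjective: for every $(N_k,A_k)\in\mathscr{N}_k$ there is $(N_{k-1},A_{k-1})\in\mathscr{N}_{k-1}$ with $\psi_k(N_{k-1},A_{k-1})=(N_k,A_k)$.
   Context: A signed subset of a finite set $E$ is a pair $X=(X^+,X^-)$ of disjoint subsets; support $\underline{X}=X^+\cup X^-$, $-X=(X^-,X^+)$. An oriented matroid $\mathcal{M}=(E,\mathcal{C})$: a collection $\mathcal{C}$ of signed subsets with (C1) empty signed set not in $\mathcal{C}$; (C2) $\mathcal{C}=-\mathcal{C}$; (C3) $\underline{X}\subseteq\underline{Y}$ for $X,Y\in\mathcal{C}$ implies $X=\pm Y$; (C4) for $X,Y\in\mathcal{C}$, $X\neq\pm Y$, $e\in X^+\cap Y^-$ there is $Z\in\mathcal{C}$ with $Z^+\subseteq X^+\cup Y^+-\{e\}$, $Z^-\subseteq X^-\cup Y^--\{e\}$. Underlying matroid $\underline{\mathcal{M}}$: circuits $\underline{X}$, $X\in\mathcal{C}$; loopless means no one-element circuit. Positive circuit: $X^-=\emptyset$; acyclic: no positive circuit. Reorientation ${}_{-A}\mathcal{M}$ ($A\subseteq E$): signed circuits ${}_{-A}X=((X^+-A)\cup(X^-\cap A),(X^--A)\cup(X^+\cap A))$; ${}_{-e}={}_{-\{e\}}$. Deletion $\mathcal{M}\backslash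 X$ on $E-X$: signed circuits $Y\in\mathcal{C}$ with $\underline{Y}\subseteq E-X$. Contraction $\mathcal{M}/X$ on $E-X$: support-minimal nonempty members of $\{(Y^+-X,Y^--X):Y\in\mathcal{C},\underline{Y}-X\ne\emptyset\}$. Broken circuit: circuit of $\underline{\mathcal{M}}$ minus its $\prec$-maximal element; $\mathrm{NBC}(\underline{\mathcal{M}})$: subsets of $E$ containing no broken circuit. $E_k=\{e_1,\dots,e_k\}$; for $N_k\subseteq E_k$, $N_k^c=E_k-N_k$. $\mathscr{N}_k$ is the set of pairs $(N_k,A_k)$ with $N_k\subseteq E_k$, $A_k\subseteq E-E_k$, $N_k\in\mathrm{NBC}(\underline{\mathcal{M}})$, and $\mathcal{M}_k:={}_{-A_k}(\mathcal{M}\backslash N_k^c/N_k)$ acyclic. For $(N_{k-1},A_{k-1})\in\mathscr{N}_{k-1}$ with $\mathcal{M}_{k-1}={}_{-A_{k-1}}(\mathcal{M}\backslash N_{k-1}^c/N_{k-1})$: $\psi_k(N_{k-1},A_{k-1})=(N_{k-1}\cup\{e_k\},A_{k-1})$ if $e_k\notin A_{k-1}$ and ${}_{-e_k}\mathcal{M}_{k-1}$ is acyclic; $=(N_{k-1},A_{k-1})$ if $e_k\notin A_{k-1}$ and ${}_{-e_k}\mathcal{M}_{k-1}$ is not acyclic; $=(N_{k-1},A_{k-1}-\{e_k\})$ if $e_k\in A_{k-1}$. *)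

theory Defs
  imports Main
begin

text \<open>Signed subsets of a ground set are pairs (X+, X-) of disjoint sets.\<close>
type_synonym 'a signed = "'a set \<times> 'a set"

definition supp :: "'a signed \<Rightarrow> 'a set" where
  "supp X = fst X \<union> snd X"

definition sneg :: "'a signed \<Rightarrow> 'a signed" where
  "sneg X = (snd X, fst X)"

definition signed_subset :: "'a set \<Rightarrow> 'a signed \<Rightarrow> bool" where
  "signed_subset E X \<longleftrightarrow> fst X \<inter> snd X = {} \<and> supp X \<subseteq> E"

definition oriented_matroid :: "'a set \<Rightarrow> 'a signed set \<Rightarrow> bool" where
  "oriented_matroid E \<C> \<longleftrightarrow>
     finite E \<and>
     (\<forall>X\<in>\<C>. signed_subset E X) \<and>
     ({}, {}) \<notin> \<C> \<and>
     (\<forall>X\<in>\<C>. sneg X \<in> \<C>) \<and>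
     (\<forall>X\<in>\<C>. \<forall>Y\<in>\<C>. supp X \<subseteq> supp Y \<longrightarrow> X = Y \<or> X = sneg Y) \<and>
     (\<forall>X\<in>\<C>. \<forall>Y\<in>\<C>. \<forall>e. X \<noteq> Y \<and> X \<noteq> sneg Y \<and> e \<in> fst X \<inter> snd Y \<longrightarrow>
        (\<exists>Z\<in>\<C>. fst Z \<subseteq> (fst X \<union> fst Y) - {e} \<and> snd Z \<subseteq> (snd X \<union> snd Y) - {e}))"

definition loopless :: "'a signed set \<Rightarrow> bool" where
  "loopless \<C> \<longleftrightarrow> (\<forall>X\<in>\<C>. card (supp X) \<noteq> 1)"

definition acyclic_om :: "'a signed set \<Rightarrow> bool" where
  "acyclic_om \<C> \<longleftrightarrow> \<not> (\<exists>X\<in>\<C>. snd X = {})"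

definition reorient_signed :: "'a set \<Rightarrow> 'a signed \<Rightarrow> 'a signed" where
  "reorient_signed A X = ((fst X - A) \<union> (snd X \<inter> A), (snd X - A) \<union> (fst X \<inter> A))"

definition reorient :: "'a set \<Rightarrow> 'a signed set \<Rightarrow> 'a signed set" where
  "reorient A \<C> = reorient_signed A ` \<C>"

definition om_delete :: "'a set \<Rightarrow> 'a signed set \<Rightarrow> 'a set \<Rightarrow> 'a signed set" where
  "om_delete E \<C> X = {Y\<in>\<C>. supp Y \<subseteq> E - X}"

definition om_contract :: "'a signed set \<Rightarrow> 'a set \<Rightarrow> 'a signed set" where
  "om_contract \<C> X =
    (let F = {(fst Y - X, snd Y - X) | Y. Y \<in> \<C> \<and> supp Y - X \<noteq> {}}
     in {W\<in>F. supp W \<noteq> {} \<and> \<not> (\<exists>W'\<in>F. supp W' \<noteq> {} \<and> supp W' \<subset> supp W)})"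

text \<open>Ground set ordered by a distinct list es = [e_1,...,e_m]; e_k = es ! (k-1),
  E_k = set (take k es).  Broken circuit: circuit minus its largest element.\<close>
definition broken :: "'a list \<Rightarrow> 'a set \<Rightarrow> 'a set" where
  "broken es D = D - {es ! Max {i. i < length es \<and> es ! i \<in> D}}"

definition nbc :: "'a set \<Rightarrow> 'a signed set \<Rightarrow> 'a list \<Rightarrow> 'a set \<Rightarrow> bool" where
  "nbc E \<C> es N \<longleftrightarrow> N \<subseteq> E \<and> \<not> (\<exists>X\<in>\<C>. broken es (supp X) \<subseteq> N)"

definition Ek :: "'a list \<Rightarrow> nat \<Rightarrow> 'a set" where
  "Ek es k = set (take k es)"

definition minorM :: "'a set \<Rightarrow> 'a signed set \<Rightarrow> 'a list \<Rightarrow> nat \<Rightarrow> 'a set \<Rightarrow> 'a set \<Rightarrow> 'a signed set" where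
  "minorM E \<C> es k N A = reorient A (om_contract (om_delete E \<C> (Ek es k - N)) N)"

definition scriptN :: "'a set \<Rightarrow> 'a signed set \<Rightarrow> 'a list \<Rightarrow> nat \<Rightarrow> ('a set \<times> 'a set) set" where
  "scriptN E \<C> es k = {(N, A). N \<subseteq> Ek es k \<and> A \<subseteq> E - Ek es k \<and> nbc E \<C> es N
                               \<and> acyclic_om (minorM E \<C> es k N A)}"

definition psi :: "'a set \<Rightarrow> 'a signed set \<Rightarrow> 'a list \<Rightarrow> nat \<Rightarrow> 'a set \<times> 'a set \<Rightarrow> 'a set \<times> 'a set" where
  "psi E \<C> es k p =
     (let N = fst p; A = snd p; e = es ! (k - 1) in
      if e \<notin> A then
        (if acyclic_om (reorient {e} (minorM E \<C> es (k - 1) N A)) then (N \<union> {e}, A) else (N, A))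
      else (N, A - {e}))"

end

theory Submission
  imports Defs
begin

text \<open>
  For independent N, the reoriented minor \<open>reorient B (M \ D / N)\<close> has a positive circuit
  iff some circuit Y of M avoiding D becomes nonnegative off N after reorienting B
  (a positive lift).  One direction is immediate; for the other, circuit elimination
  turns a positive lift into one whose support off N is minimal, which is then a
  circuit of the contraction.

  Let e = e_k and (N, A) in N_k.  If e \<in> N, then (N - {e}, A) is a preimage.  Otherwise
  one of (N, A) and (N, A \<union> {e}) is: positive lifts at level k-1 for A and for A \<union> {e}
  must both contain e, with opposite signs, and eliminating e between them gives a
  positive lift at level k.  They are not opposite circuits, since then their support
  would lie in N \<union> {e}, with e the largest element, so N would contain a broken circuit.
\<close>

lemma sneg_sneg [simp]: "sneg (sneg X) = X"
  by (simp add: sneg_def)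

lemma supp_sneg [simp]: "supp (sneg X) = supp X"
  by (auto simp: sneg_def supp_def)

lemma om_finite: "oriented_matroid E \<C> \<Longrightarrow> finite E"
  by (simp add: oriented_matroid_def)

lemma om_supp_subset: "oriented_matroid E \<C> \<Longrightarrow> Y \<in> \<C> \<Longrightarrow> supp Y \<subseteq> E"
  by (auto simp: oriented_matroid_def signed_subset_def)

lemma om_finite_supp: "oriented_matroid E \<C> \<Longrightarrow> Y \<in> \<C> \<Longrightarrow> finite (supp Y)"
  by (meson finite_subset om_finite om_supp_subset)

lemma om_elimination:
  assumes "oriented_matroid E \<C>" "X \<in> \<C>" "Y \<in> \<C>" "X \<noteq> Y" "X \<noteq> sneg Y"
    and "e \<in> fst X" "e \<in> snd Y"
  obtains Z where "Z \<in> \<C>" "fst Z \<subseteq> fst X \<union> fst Y - {e}" "snd Z \<subseteq> snd X \<union> snd Y - {e}"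
proof -
  have "\<forall>X\<in>\<C>. \<forall>Y\<in>\<C>. \<forall>e. X \<noteq> Y \<and> X \<noteq> sneg Y \<and> e \<in> fst X \<inter> snd Y \<longrightarrow>
      (\<exists>Z\<in>\<C>. fst Z \<subseteq> fst X \<union> fst Y - {e} \<and> snd Z \<subseteq> snd X \<union> snd Y - {e})"
    using assms(1) unfolding oriented_matroid_def by (elim conjE)
  then show thesis
    using assms(2-) that by blast
qed

definition om_indep :: "'a signed set \<Rightarrow> 'a set \<Rightarrow> bool" where
  "om_indep \<C> N \<longleftrightarrow> (\<forall>Y\<in>\<C>. \<not> supp Y \<subseteq> N)"

definition negs :: "'a set \<Rightarrow> 'a set \<Rightarrow> 'a signed \<Rightarrow> 'a set" where
  "negs N B Y = (snd Y - N - B) \<union> ((fst Y - N) \<inter> B)"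

lemma snd_reorient_contract: "snd (reorient_signed B (fst Y - N, snd Y - N)) = negs N B Y"
  by (auto simp: reorient_signed_def negs_def)

lemma negs_subset_supp: "negs N B Y \<subseteq> supp Y - N"
  by (auto simp: negs_def supp_def)

definition has_positive_lift :: "'a signed set \<Rightarrow> 'a set \<Rightarrow> 'a set \<Rightarrow> 'a set \<Rightarrow> bool" where
  "has_positive_lift \<C> D N B \<longleftrightarrow> (\<exists>Y\<in>\<C>. supp Y \<inter> D = {} \<and> negs N B Y = {})"

lemma om_elimination_negs:
  assumes om: "oriented_matroid E \<C>" and XY: "X \<in> \<C>" "Y \<in> \<C>" "X \<noteq> Y" "X \<noteq> sneg Y"
    and f: "f \<in> supp X - N" "f \<notin> negs N B X" "f \<in> negs N B Y"
  obtains Z where "Z \<in> \<C>" "supp Z \<subseteq> supp X \<union> supp Y - {f}"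
    "negs N B Z \<subseteq> negs N B X \<union> negs N B Y"
proof -
  have "\<exists>Z\<in>\<C>. fst Z \<subseteq> fst X \<union> fst Y - {f} \<and> snd Z \<subseteq> snd X \<union> snd Y - {f}"
  proof (cases "f \<in> B")
    case False
    then have "f \<in> fst X" "f \<in> snd Y"
      using f by (auto simp: negs_def supp_def)
    then show ?thesis
      using om_elimination[OF om XY] by metis
  next
    case True
    then have "f \<in> fst Y" "f \<in> snd X"
      using f by (auto simp: negs_def supp_def)
    moreover have "Y \<noteq> X" "Y \<noteq> sneg X"
      using XY(3,4) by auto
    ultimately show ?thesis
      using om_elimination[OF om XY(2,1)] by (metis sup_commute)
  qed
  then show thesis
    by (auto intro!: that simp: supp_def negs_def)
qed

text \<open>Induction on the number of negative elements of Y1: eliminating one of them against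
  Y0 removes it without creating new ones.\<close>
lemma positive_lift_below:
  assumes om: "oriented_matroid E \<C>"
    and Y0: "Y0 \<in> \<C>" "supp Y0 \<inter> D = {}" "negs N B Y0 = {}"
    and Y1: "Y1 \<in> \<C>" "supp Y1 \<inter> D = {}" "supp Y1 - N \<subset> supp Y0 - N"
  shows "\<exists>Y\<in>\<C>. supp Y \<inter> D = {} \<and> negs N B Y = {} \<and> supp Y - N \<subset> supp Y0 - N"
  using Y1
proof (induction "card (negs N B Y1)" arbitrary: Y1 rule: less_induct)
  case less
  show ?case
  proof (cases "negs N B Y1 = {}")
    case True
    then show ?thesis using less.prems by blast
  next
    case False
    then obtain f where f: "f \<in> negs N B Y1" by blast
    have f0: "f \<in> supp Y0 - N" "f \<notin> negs N B Y0"
      using f negs_subset_supp[of N B Y1] less.prems(3) Y0(3) by blast+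
    have "supp Y0 \<noteq> supp Y1"
      using less.prems(3) by blast
    then have "Y0 \<noteq> Y1" "Y0 \<noteq> sneg Y1"
      by auto
    then obtain Z where Z: "Z \<in> \<C>" "supp Z \<subseteq> supp Y0 \<union> supp Y1 - {f}"
      "negs N B Z \<subseteq> negs N B Y0 \<union> negs N B Y1"
      using om_elimination_negs[OF om Y0(1) less.prems(1) _ _ f0 f] by blast
    have "f \<notin> negs N B Z"
      using Z(2) negs_subset_supp[of N B Z] by blast
    then have "negs N B Z \<subset> negs N B Y1"
      using Z(3) Y0(3) f by blast
    moreover have "finite (negs N B Y1)"
      by (rule finite_subset[OF negs_subset_supp finite_Diff[OF om_finite_supp[OF om less.prems(1)]]])
    ultimately have "card (negs N B Z) < card (negs N B Y1)"
      by (rule psubset_card_mono[rotated])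
    moreover have "supp Z \<inter> D = {}"
      using Z(2) Y0(2) less.prems(2) by blast
    moreover have "supp Z - N \<subset> supp Y0 - N"
      using Z(2) less.prems(3) f0(1) by blast
    ultimately show ?thesis
      using less.hyps Z(1) by blast
  qed
qed

lemma minimal_positive_lift:
  assumes om: "oriented_matroid E \<C>" and "has_positive_lift \<C> D N B"
  obtains Y where "Y \<in> \<C>" "supp Y \<inter> D = {}" "negs N B Y = {}"
    "\<And>Y1. Y1 \<in> \<C> \<Longrightarrow> supp Y1 \<inter> D = {} \<Longrightarrow> \<not> supp Y1 - N \<subset> supp Y - N"
proof -
  let ?lift = "\<lambda>Y. Y \<in> \<C> \<and> supp Y \<inter> D = {} \<and> negs N B Y = {}"
  obtain Y0 where Y0: "?lift Y0" and least: "\<And>Y. ?lift Y \<Longrightarrow> card (supp Y0 - N) \<le> card (supp Y - N)"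
    using assms(2) ex_has_least_nat[of ?lift _ "\<lambda>Y. card (supp Y - N)"]
    unfolding has_positive_lift_def by metis
  then have Y0_lift: "Y0 \<in> \<C>" "supp Y0 \<inter> D = {}" "negs N B Y0 = {}"
    by simp_all
  have "\<not> supp Y1 - N \<subset> supp Y0 - N" if Y1: "Y1 \<in> \<C>" "supp Y1 \<inter> D = {}" for Y1
  proof
    assume "supp Y1 - N \<subset> supp Y0 - N"
    then obtain Y where "?lift Y" "supp Y - N \<subset> supp Y0 - N"
      using positive_lift_below[OF om Y0_lift Y1] by blast
    moreover have "finite (supp Y0 - N)"
      using om_finite_supp[OF om] Y0 by blast
    ultimately show False
      using least psubset_card_mono by (metis leD)
  qed
  then show thesis using that Y0 by blast
qed

lemma om_delete_iff:
  "oriented_matroid E \<C> \<Longrightarrow> Y \<in> om_delete E \<C> D \<longleftrightarrow> Y \<in> \<C> \<and> supp Y \<inter> D = {}"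
  by (auto simp: om_delete_def dest: om_supp_subset)

lemma om_contractE:
  assumes "W \<in> om_contract \<C> N"
  obtains Y where "Y \<in> \<C>" "W = (fst Y - N, snd Y - N)"
  using assms unfolding om_contract_def Let_def by blast

lemma om_contractI:
  assumes "Y \<in> \<C>" "supp Y - N \<noteq> {}"
    and "\<And>Y1. Y1 \<in> \<C> \<Longrightarrow> \<not> supp Y1 - N \<subset> supp Y - N"
  shows "(fst Y - N, snd Y - N) \<in> om_contract \<C> N"
proof -
  define F where "F = {(fst Y' - N, snd Y' - N) |Y'. Y' \<in> \<C> \<and> supp Y' - N \<noteq> {}}"
  have supp_contract: "supp (fst Y' - N, snd Y' - N) = supp Y' - N" for Y' :: "'a signed"
    by (auto simp: supp_def)
  have "(fst Y - N, snd Y - N) \<in> F"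
    unfolding F_def using assms(1,2) by blast
  moreover have "\<not> supp W \<subset> supp Y - N" if "W \<in> F" for W
  proof -
    obtain Y1 where "Y1 \<in> \<C>" "W = (fst Y1 - N, snd Y1 - N)"
      using \<open>W \<in> F\<close> unfolding F_def by blast
    then show ?thesis
      using assms(3) by (simp add: supp_contract)
  qed
  ultimately have "(fst Y - N, snd Y - N) \<in>
      {W \<in> F. supp W \<noteq> {} \<and> \<not> (\<exists>W'\<in>F. supp W' \<noteq> {} \<and> supp W' \<subset> supp W)}"
    using assms(2) by (simp add: supp_contract[of Y])
  then show ?thesis
    unfolding om_contract_def Let_def F_def .
qed

lemma acyclic_contract_iff:
  assumes om: "oriented_matroid E \<C>" and indep: "om_indep \<C> N"
  shows "acyclic_om (reorient B (om_contract (om_delete E \<C> D) N)) \<longleftrightarrow>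
    \<not> has_positive_lift \<C> D N B" (is "acyclic_om ?M \<longleftrightarrow> _")
proof -
  have "\<not> acyclic_om ?M" if lift: "has_positive_lift \<C> D N B"
  proof -
    obtain Y where Y: "Y \<in> \<C>" "supp Y \<inter> D = {}" "negs N B Y = {}"
      and min: "\<And>Y1. Y1 \<in> \<C> \<Longrightarrow> supp Y1 \<inter> D = {} \<Longrightarrow> \<not> supp Y1 - N \<subset> supp Y - N"
      using minimal_positive_lift[OF om lift] by blast
    have "(fst Y - N, snd Y - N) \<in> om_contract (om_delete E \<C> D) N"
      using Y indep min by (intro om_contractI) (auto simp: om_delete_iff[OF om] om_indep_def)
    then show ?thesis
      using Y(3) by (force simp: acyclic_om_def reorient_def snd_reorient_contract)
  qed
  moreover have "has_positive_lift \<C> D N B" if cyclic: "\<not> acyclic_om ?M"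
  proof -
    obtain W where W: "W \<in> om_contract (om_delete E \<C> D) N" "snd (reorient_signed B W) = {}"
      using cyclic by (auto simp: acyclic_om_def reorient_def)
    then obtain Y where "Y \<in> om_delete E \<C> D" "W = (fst Y - N, snd Y - N)"
      by (elim om_contractE)
    then have "Y \<in> \<C>" "supp Y \<inter> D = {}" "negs N B Y = {}"
      using W(2) by (simp_all add: om_delete_iff[OF om] snd_reorient_contract)
    then show ?thesis
      unfolding has_positive_lift_def by blast
  qed
  ultimately show ?thesis by blast
qed

lemma reorient_reorient: "e \<notin> A \<Longrightarrow> reorient {e} (reorient A S) = reorient (insert e A) S"
  by (auto simp: reorient_def reorient_signed_def image_image intro!: image_cong)

lemma acyclic_minorM_iff:
  assumes "oriented_matroid E \<C>" "om_indep \<C> N"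
  shows "acyclic_om (minorM E \<C> es k N B) \<longleftrightarrow> \<not> has_positive_lift \<C> (Ek es k - N) N B"
  using acyclic_contract_iff[OF assms] by (simp add: minorM_def)

lemma acyclic_reorient_minorM_iff:
  assumes "oriented_matroid E \<C>" "om_indep \<C> N" "e \<notin> B"
  shows "acyclic_om (reorient {e} (minorM E \<C> es k N B)) \<longleftrightarrow>
    \<not> has_positive_lift \<C> (Ek es k - N) N (insert e B)"
  unfolding minorM_def reorient_reorient[OF assms(3)] by (rule acyclic_contract_iff[OF assms(1,2)])

lemma positive_lift_mono:
  assumes "has_positive_lift \<C> D N' B" "N' \<subseteq> N" "B - N = A - N"
  shows "has_positive_lift \<C> D N A"
proof -
  have "negs N A Y \<subseteq> negs N' B Y" for Y
    using assms(2,3) by (auto simp: negs_def)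
  then show ?thesis
    using assms(1) unfolding has_positive_lift_def by blast
qed

lemma not_both_positive_lifts:
  assumes om: "oriented_matroid E \<C>"
    and no_circuit: "\<forall>Y\<in>\<C>. \<not> supp Y \<subseteq> insert e N"
    and e: "e \<notin> N" "e \<notin> A"
    and no_lift: "\<not> has_positive_lift \<C> (insert e D) N A"
  shows "\<not> has_positive_lift \<C> D N A \<or> \<not> has_positive_lift \<C> D N (insert e A)"
proof (rule ccontr)
  assume "\<not> ?thesis"
  then obtain Y Y' where Y: "Y \<in> \<C>" "supp Y \<inter> D = {}" "negs N A Y = {}"
    and Y': "Y' \<in> \<C>" "supp Y' \<inter> D = {}" "negs N (insert e A) Y' = {}"
    by (auto simp: has_positive_lift_def)
  have negs_Y': "negs N A Y' \<subseteq> {e}"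
    using Y'(3) by (auto simp: negs_def)
  have "e \<in> supp Y" "e \<in> supp Y'"
    using no_lift Y Y' negs_Y' negs_subset_supp[of N A Y'] unfolding has_positive_lift_def by blast+
  then have e_Y: "e \<in> supp Y - N" "e \<notin> negs N A Y" and e_Y': "e \<in> negs N A Y'"
    using e Y(3) Y'(3) by (auto simp: negs_def supp_def)
  have "Y \<noteq> sneg Y'"
  proof
    assume "Y = sneg Y'"
    then have "supp Y \<subseteq> insert e N"
      using Y(3) Y'(3) by (auto simp: negs_def supp_def sneg_def)
    then show False using no_circuit Y(1) by blast
  qed
  moreover have "Y \<noteq> Y'"
    using e_Y e_Y' by auto
  ultimately obtain Z where "Z \<in> \<C>" "supp Z \<subseteq> supp Y \<union> supp Y' - {e}"
    "negs N A Z \<subseteq> negs N A Y \<union> negs N A Y'"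
    using om_elimination_negs[OF om Y(1) Y'(1)] e_Y e_Y' by metis
  then have "has_positive_lift \<C> (insert e D) N A"
    using Y Y' negs_Y' negs_subset_supp[of N A Z] unfolding has_positive_lift_def by blast
  with no_lift show False ..
qed

lemma nbc_indep: "nbc E \<C> es N \<Longrightarrow> om_indep \<C> N"
  by (auto simp: nbc_def broken_def om_indep_def)

lemma nbc_subset: "nbc E \<C> es N \<Longrightarrow> N' \<subseteq> N \<Longrightarrow> nbc E \<C> es N'"
  unfolding nbc_def by (meson subset_trans)

lemma Ek_Suc: "i < length es \<Longrightarrow> Ek es (Suc i) = insert (es ! i) (Ek es i)"
  by (simp add: Ek_def take_Suc_conv_app_nth)

lemma index_less_if_in_Ek:
  assumes "distinct es" "j < length es" "es ! j \<in> Ek es i"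
  shows "j < i"
proof -
  obtain j' where "j' < length (take i es)" "take i es ! j' = es ! j"
    using assms(3) by (auto simp: Ek_def in_set_conv_nth)
  then have "j' < i" "j' < length es" "es ! j' = es ! j"
    by auto
  then show ?thesis
    using assms(1,2) nth_eq_iff_index_eq by metis
qed

lemma nth_notin_Ek: "distinct es \<Longrightarrow> i < length es \<Longrightarrow> es ! i \<notin> Ek es i"
  using index_less_if_in_Ek by blast

text \<open>Every element of N precedes e_(i+1) = es ! i, so a circuit inside N \<union> {e_(i+1)} would have its broken circuit inside N.\<close>
lemma nbc_no_circuit_insert:
  assumes dist: "distinct es" and i: "i < length es"
    and nbc: "nbc E \<C> es N" and N: "N \<subseteq> Ek es i"
  shows "\<forall>Y\<in>\<C>. \<not> supp Y \<subseteq> insert (es ! i) N"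
proof (intro ballI notI)
  fix Y assume Y: "Y \<in> \<C>" and sY: "supp Y \<subseteq> insert (es ! i) N"
  show False
  proof (cases "es ! i \<in> supp Y")
    case False
    then show False
      using nbc_indep[OF nbc] Y sY by (auto simp: om_indep_def)
  next
    case True
    let ?I = "{j. j < length es \<and> es ! j \<in> supp Y}"
    have "j \<le> i" if j: "j \<in> ?I" for j
    proof (cases "es ! j = es ! i")
      case True
      then show ?thesis
        using j nth_eq_iff_index_eq[OF dist _ i] by auto
    next
      case False
      then have "es ! j \<in> Ek es i"
        using j sY N by auto
      then show ?thesis
        using j index_less_if_in_Ek[OF dist] by fastforce
    qed
    then have "Max ?I = i"
      using True i by (intro Max_eqI) auto
    then have "broken es (supp Y) \<subseteq> N"
      using sY by (auto simp: broken_def)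
    then show False
      using nbc Y by (auto simp: nbc_def)
  qed
qed

lemma psi_preimage_if_mem:
  assumes om: "oriented_matroid E \<C>" and dist: "distinct es" and i: "i < length es"
    and p: "(N, A) \<in> scriptN E \<C> es (Suc i)" and e: "es ! i \<in> N"
  shows "psi E \<C> es (Suc i) (N - {es ! i}, A) = (N, A)"
    "(N - {es ! i}, A) \<in> scriptN E \<C> es i"
proof -
  let ?e = "es ! i" and ?N' = "N - {es ! i}"
  have N: "N \<subseteq> Ek es (Suc i)" "A \<subseteq> E - Ek es (Suc i)" "nbc E \<C> es N"
    and acyc: "acyclic_om (minorM E \<C> es (Suc i) N A)"
    using p by (auto simp: scriptN_def)
  have D: "Ek es i - ?N' = Ek es (Suc i) - N"
    using Ek_Suc[OF i] nth_notin_Ek[OF dist i] e by auto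
  have eA: "?e \<notin> A"
    using N(2) Ek_Suc[OF i] by auto
  have indep: "om_indep \<C> N" "om_indep \<C> ?N'"
    using nbc_indep nbc_subset N(3) by blast+
  have no_lift: "\<not> has_positive_lift \<C> (Ek es (Suc i) - N) N A"
    using acyc acyclic_minorM_iff[OF om indep(1)] by blast
  have "\<not> has_positive_lift \<C> (Ek es (Suc i) - N) ?N' B" if "B - N = A - N" for B
    using positive_lift_mono[of \<C> _ ?N' B N A] no_lift that by blast
  then have "acyclic_om (minorM E \<C> es i ?N' A)"
    "acyclic_om (reorient {?e} (minorM E \<C> es i ?N' A))"
    using acyclic_minorM_iff[OF om indep(2)] acyclic_reorient_minorM_iff[OF om indep(2) eA] D e
    by (auto simp: insert_absorb)
  then show "psi E \<C> es (Suc i) (?N', A) = (N, A)" "(?N', A) \<in> scriptN E \<C> es i"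
    using N e eA Ek_Suc[OF i] nbc_subset[OF N(3)]
    by (auto simp: psi_def scriptN_def insert_absorb)
qed

lemma psi_preimage_if_not_mem:
  assumes om: "oriented_matroid E \<C>" and dist: "distinct es" and E: "set es = E"
    and i: "i < length es"
    and p: "(N, A) \<in> scriptN E \<C> es (Suc i)" and e: "es ! i \<notin> N"
  shows "\<exists>q \<in> scriptN E \<C> es i. psi E \<C> es (Suc i) q = (N, A)"
proof -
  let ?e = "es ! i" and ?D = "Ek es i - N"
  have N: "N \<subseteq> Ek es i" "A \<subseteq> E - Ek es (Suc i)" "nbc E \<C> es N"
    and acyc: "acyclic_om (minorM E \<C> es (Suc i) N A)"
    using p e Ek_Suc[OF i] by (auto simp: scriptN_def)
  have eA: "?e \<notin> A" and eAE: "insert ?e A \<subseteq> E - Ek es i"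
    using N(2) Ek_Suc[OF i] nth_notin_Ek[OF dist i] nth_mem[OF i] E by auto
  have indep: "om_indep \<C> N"
    using nbc_indep N(3) by blast
  have "Ek es (Suc i) - N = insert ?e ?D"
    using Ek_Suc[OF i] e by auto
  then have "\<not> has_positive_lift \<C> (insert ?e ?D) N A"
    using acyc acyclic_minorM_iff[OF om indep] by simp
  then have not_both: "\<not> has_positive_lift \<C> ?D N A \<or> \<not> has_positive_lift \<C> ?D N (insert ?e A)"
    using not_both_positive_lifts[OF om nbc_no_circuit_insert[OF dist i N(3,1)] e eA] by blast
  show ?thesis
  proof (cases "has_positive_lift \<C> ?D N (insert ?e A)")
    case True
    then have "acyclic_om (minorM E \<C> es i N A)"
      using not_both acyclic_minorM_iff[OF om indep] by blast
    then have "(N, A) \<in> scriptN E \<C> es i"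
      using N(1,3) eAE by (simp add: scriptN_def)
    moreover have "\<not> acyclic_om (reorient {?e} (minorM E \<C> es i N A))"
      using True acyclic_reorient_minorM_iff[OF om indep eA] by blast
    then have "psi E \<C> es (Suc i) (N, A) = (N, A)"
      using eA by (simp add: psi_def)
    ultimately show ?thesis by blast
  next
    case False
    then have "acyclic_om (minorM E \<C> es i N (insert ?e A))"
      using acyclic_minorM_iff[OF om indep] by blast
    then have "(N, insert ?e A) \<in> scriptN E \<C> es i"
      using N(1,3) eAE by (simp add: scriptN_def)
    moreover have "psi E \<C> es (Suc i) (N, insert ?e A) = (N, A)"
      using eA by (simp add: psi_def)
    ultimately show ?thesis by blast
  qed
qed

theorem lemma2p5:
  fixes E :: "'a set" and \<C> :: "'a signed set" and es :: "'a list" and k :: nat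
  assumes "oriented_matroid E \<C>"
    and "loopless \<C>"
    and "distinct es" and "set es = E"
    and "1 \<le> k" and "k \<le> length es"
  shows "\<forall>p \<in> scriptN E \<C> es k. \<exists>q \<in> scriptN E \<C> es (k - 1). psi E \<C> es k q = p"
proof
  fix p assume "p \<in> scriptN E \<C> es k"
  moreover obtain N A where NA: "p = (N, A)"
    by fastforce
  moreover define i where "i = k - 1"
  ultimately have k: "k = Suc i" and i: "i < length es" and p: "(N, A) \<in> scriptN E \<C> es (Suc i)"
    using assms(5,6) by simp_all
  have "\<exists>q \<in> scriptN E \<C> es i. psi E \<C> es (Suc i) q = (N, A)"
  proof (cases "es ! i \<in> N")
    case True
    then show ?thesis
      using psi_preimage_if_mem[OF assms(1,3) i p] by blast
  next
    case False
    then show ?thesis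
      using psi_preimage_if_not_mem[OF assms(1,3,4) i p] by blast
  qed
  then show "\<exists>q \<in> scriptN E \<C> es (k - 1). psi E \<C> es k q = p"
    unfolding NA k diff_Suc_1 .
qed

end
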